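(* Let $R=\bigoplus_{d\ge0}H^0(G_{2,6},\mathcal{L}(3\omega_2)^{\otimes d})^T$ and let $X_1=p_{14}p_{25}p_{36}$, $X_2=p_{12}p_{35}p_{46}$, $X_3=p_{13}p_{25}p_{46}$, $X_4=p_{12}p_{34}p_{56}$, $X_5=p_{13}p_{24}p_{56}$, viewed as elements of $R_1$. Let $F(x_1,\ldots,x_5)=x_3x_4^2-x_1x_2x_5+x_1x_3x_4-x_2x_3x_4+x_2x_3x_5-x_3x_4x_5\in\mathbb{C}[x_1,\ldots,x_5]$. Then $F(X_1,X_2,X_3,X_4,X_5)=0$ in $R$.
   Context: $G=SL(6,\mathbb{C})$, $T$ its diagonal maximal torus, $G_{2,6}$ the Grassmannian of 2-planes in $\mathbb{C}^6$ in its Plücker embedding, $p_{ab}$ ($a<b$) the Plücker coordinates (dual basis to $e_a\wedge e_b$), regarded as sections of $\mathcal{L}(\omega_2)=\mathcal{O}(1)$, and $\mathcal{L}(3\omega_2)=\mathcal{O}(3)$ with its natural $T$-linearization. *)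

theory Defs
  imports Complex_Main
begin

text \<open>A point of the affine cone over G(2,6) is the row space of a 2x6 complex matrix
  with rows u, v (columns indexed 1..6). Sections of O(d) on G(2,6) are the degree-d part of the homogeneous
  coordinate ring, i.e. polynomials in the p_ab viewed as functions on the cone; so an
  element of R vanishes iff it vanishes at every 2x6 matrix.\<close>

definition plucker :: "(nat \<Rightarrow> complex) \<Rightarrow> (nat \<Rightarrow> complex) \<Rightarrow> nat \<Rightarrow> nat \<Rightarrow> complex" where
  "plucker u v a b = u a * v b - u b * v a"

definition X1 where "X1 u v = plucker u v 1 4 * plucker u v 2 5 * plucker u v 3 6"
definition X2 where "X2 u v = plucker u v 1 2 * plucker u v 3 5 * plucker u v 4 6"
definition X3 where "X3 u v = plucker u v 1 3 * plucker u v 2 5 * plucker u v 4 6"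
definition X4 where "X4 u v = plucker u v 1 2 * plucker u v 3 4 * plucker u v 5 6"
definition X5 where "X5 u v = plucker u v 1 3 * plucker u v 2 4 * plucker u v 5 6"

definition F :: "complex \<Rightarrow> complex \<Rightarrow> complex \<Rightarrow> complex \<Rightarrow> complex \<Rightarrow> complex" where
  "F x1 x2 x3 x4 x5 = x3 * x4^2 - x1 * x2 * x5 + x1 * x3 * x4 - x2 * x3 * x4
     + x2 * x3 * x5 - x3 * x4 * x5"

end

theory Submission
  imports Defs
begin

text \<open>Writing F = x3 (x4 - x2) (x4 - x5) + x1 (x3 x4 - x2 x5), each of the differences
  x4 - x2, x4 - x5 and x3 x4 - x2 x5 collapses, by a three-term Pluecker relation, to a
  single monomial. Both summands then become the product
  p12 p13 p14 p23 p25 p36 p45 p46 p56, with opposite signs.\<close>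

lemma plucker_relation:
  "plucker u v a b * plucker u v c d - plucker u v a c * plucker u v b d
     + plucker u v a d * plucker u v b c = 0"
  unfolding plucker_def by algebra

lemma F_factorization:
  "F x1 x2 x3 x4 x5 = x3 * (x4 - x2) * (x4 - x5) + x1 * (x3 * x4 - x2 * x5)"
  unfolding F_def by (simp add: algebra_simps power2_eq_square)

theorem lemma4p5:
  fixes u v :: "nat \<Rightarrow> complex"
  shows "F (X1 u v) (X2 u v) (X3 u v) (X4 u v) (X5 u v) = 0"
proof -
  define p where "p = plucker u v"
  have "X4 u v - X2 u v = - (p 1 2 * p 3 6 * p 4 5)"
    using plucker_relation[of u v 3 4 5 6]
    unfolding X4_def X2_def p_def by algebra
  moreover have "X4 u v - X5 u v = - (p 5 6 * p 1 4 * p 2 3)"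
    using plucker_relation[of u v 1 2 3 4]
    unfolding X4_def X5_def p_def by algebra
  moreover have "X3 u v * X4 u v - X2 u v * X5 u v
      = - (p 1 2 * p 1 3 * p 4 6 * p 5 6 * p 2 3 * p 4 5)"
    using plucker_relation[of u v 2 3 4 5]
    unfolding X2_def X3_def X4_def X5_def p_def by algebra
  ultimately show ?thesis
    unfolding F_factorization X1_def X3_def p_def[symmetric] by algebra
qed

end
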